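(* There is an absolute constant $c>0$ such that for every $\ell\ge 2$, every deterministic online algorithm for the soft allocation problem in dimension $\ell$ with all weights equal to $1$ has competitive ratio at least $c\,\ell$. That is, the competitive ratio of soft allocation is $\Omega(\ell)$.
   Context: Soft allocation problem in dimension $\ell$ with weights $w\in(0,\infty)^\ell$: an algorithm maintains $x(t)\in\Delta^{\ell-1}=\{x\in[0,1]^\ell:\sum_i x_i=1\}$ starting from some $x(0)$. At each time $t=1,2,\dots$ a direction $r_t\in\{1,\dots,\ell\}$ and a non-increasing function $f_t:[0,1]\to\mathbb{R}_{\ge0}\cup\{\infty\}$ are revealed; the algorithm moves from $x(t-1)$ to $x(t)$ knowing only data revealed so far, paying $\sum_i w_i|x_i(t)-x_i(t-1)|+f_t(x_{r_t}(t))$. An online algorithm is $\rho$-competitive if there is $b$ independent of the request sequence such that its total cost is at most $\rho\cdot\mathrm{OPT}+b$ on every sequence, where $\mathrm{OPT}$ is the optimal offline total cost. *)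

theory Defs
  imports Complex_Main "HOL-Library.Extended_Real"
begin

definition simplex :: "nat \<Rightarrow> (nat \<Rightarrow> real) set" where
  "simplex l = {x. (\<forall>i<l. 0 \<le> x i \<and> x i \<le> 1) \<and> (\<forall>i\<ge>l. x i = 0) \<and> (\<Sum>i<l. x i) = 1}"

text \<open>A request: a direction r and a cost function f : [0,1] -> [0,\<infinity>], non-increasing.\<close>
type_synonym request = "nat \<times> (real \<Rightarrow> ereal)"

definition valid_request :: "nat \<Rightarrow> request \<Rightarrow> bool" where
  "valid_request l q \<longleftrightarrow> fst q < l \<and>
     (\<forall>u\<in>{0..1}. 0 \<le> snd q u) \<and>
     (\<forall>u\<in>{0..1}. \<forall>v\<in>{0..1}. u \<le> v \<longrightarrow> snd q v \<le> snd q u)"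

definition valid_seq :: "nat \<Rightarrow> request list \<Rightarrow> bool" where
  "valid_seq l \<sigma> \<longleftrightarrow> (\<forall>q\<in>set \<sigma>. valid_request l q)"

definition traj_cost :: "nat \<Rightarrow> (nat \<Rightarrow> real) \<Rightarrow> request list \<Rightarrow> (nat \<Rightarrow> nat \<Rightarrow> real) \<Rightarrow> ereal" where
  "traj_cost l w \<sigma> y = (\<Sum>t<length \<sigma>.
      ereal (\<Sum>i<l. w i * \<bar>y (Suc t) i - y t i\<bar>) + snd (\<sigma> ! t) (y (Suc t) (fst (\<sigma> ! t))))"

text \<open>A deterministic online algorithm maps the requests revealed so far to the current
  point: x(t) = A (take t \<sigma>); in particular x(0) = A [].\<close>
definition online_alg :: "nat \<Rightarrow> (request list \<Rightarrow> nat \<Rightarrow> real) \<Rightarrow> bool" where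
  "online_alg l A \<longleftrightarrow> (\<forall>\<sigma>. valid_seq l \<sigma> \<longrightarrow> A \<sigma> \<in> simplex l)"

definition alg_cost :: "nat \<Rightarrow> (nat \<Rightarrow> real) \<Rightarrow> (request list \<Rightarrow> nat \<Rightarrow> real) \<Rightarrow> request list \<Rightarrow> ereal" where
  "alg_cost l w A \<sigma> = traj_cost l w \<sigma> (\<lambda>t. A (take t \<sigma>))"

definition opt_cost :: "nat \<Rightarrow> (nat \<Rightarrow> real) \<Rightarrow> (nat \<Rightarrow> real) \<Rightarrow> request list \<Rightarrow> ereal" where
  "opt_cost l w x0 \<sigma> = (INF y\<in>{y. y 0 = x0 \<and> (\<forall>t. y t \<in> simplex l)}. traj_cost l w \<sigma> y)"

definition competitive :: "nat \<Rightarrow> (nat \<Rightarrow> real) \<Rightarrow> (request list \<Rightarrow> nat \<Rightarrow> real) \<Rightarrow> real \<Rightarrow> bool" where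
  "competitive l w A \<rho> \<longleftrightarrow> (\<exists>b::real. \<forall>\<sigma>. valid_seq l \<sigma> \<longrightarrow>
      alg_cost l w A \<sigma> \<le> ereal \<rho> * opt_cost l w (A []) \<sigma> + ereal b)"

end

theory Submission
  imports Defs
begin

text \<open>
  The adversary always requests the currently smallest coordinate r of the algorithm's point,
  which is at most 1/l, with the cost function charging the penalty 1/(l(l-1)) unless
  x_r \<ge> 1/(l-1). Since 1/(l-1) - 1/l = 1/(l(l-1)), the algorithm pays the penalty in every
  step, either as movement or as service cost. Offline, some coordinate j is requested at most
  T/l times in T steps; moving once to the uniform distribution on the other l-1 coordinates
  costs at most 2 and afterwards only the requests to j are charged. Hence the algorithm pays
  T/(l(l-1)) against an optimum of at most 2 + T/(l^2(l-1)), which forces ratio \<ge> l/2.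
\<close>

lemma simplex_nonneg: "x \<in> simplex l \<Longrightarrow> 0 \<le> x i"
  unfolding simplex_def by (cases "i < l") auto

lemma simplex_l1_dist_le_2:
  assumes "x \<in> simplex l" and "z \<in> simplex l"
  shows "(\<Sum>i<l. \<bar>z i - x i\<bar>) \<le> 2"
proof -
  have "(\<Sum>i<l. \<bar>z i - x i\<bar>) \<le> (\<Sum>i<l. z i + x i)"
    using simplex_nonneg[OF assms(1)] simplex_nonneg[OF assms(2)]
    by (intro sum_mono) (simp add: abs_le_iff)
  also have "\<dots> = 2"
    using assms by (simp add: sum.distrib simplex_def)
  finally show ?thesis .
qed

definition least_coord :: "nat \<Rightarrow> (nat \<Rightarrow> real) \<Rightarrow> nat" where
  "least_coord l x = arg_min_on x {..<l}"

lemma least_coord_lt: "0 < l \<Longrightarrow> least_coord l x < l"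
  unfolding least_coord_def using arg_min_if_finite(1)[of "{..<l}" x] by auto

lemma least_coord_le: "j < l \<Longrightarrow> x (least_coord l x) \<le> x j"
  unfolding least_coord_def by (rule arg_min_least) auto

lemma simplex_least_coord_le:
  assumes "x \<in> simplex l" and "0 < l"
  shows "x (least_coord l x) \<le> 1 / real l"
proof -
  have "real l * x (least_coord l x) = (\<Sum>i<l. x (least_coord l x))"
    by simp
  also have "\<dots> \<le> (\<Sum>i<l. x i)"
    by (intro sum_mono least_coord_le) simp
  also have "\<dots> = 1"
    using assms(1) by (simp add: simplex_def)
  finally show ?thesis
    using assms(2) by (simp add: field_simps)
qed

definition uniform_avoiding :: "nat \<Rightarrow> nat \<Rightarrow> nat \<Rightarrow> real" where
  "uniform_avoiding l j i = (if i < l \<and> i \<noteq> j then 1 / (real l - 1) else 0)"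

lemma uniform_avoiding_in_simplex:
  assumes "2 \<le> l" and "j < l"
  shows "uniform_avoiding l j \<in> simplex l"
proof -
  have "(\<Sum>i<l. uniform_avoiding l j i) = (\<Sum>i\<in>{..<l} - {j}. 1 / (real l - 1))"
    unfolding uniform_avoiding_def by (rule sum.mono_neutral_cong_right) auto
  also have "\<dots> = 1"
    using assms by (simp add: card_Diff_singleton of_nat_diff)
  finally show ?thesis
    using assms(1) unfolding simplex_def uniform_avoiding_def by auto
qed

lemma ex_rarely_chosen:
  fixes r :: "nat \<Rightarrow> nat"
  assumes "0 < l" and "\<forall>t<T. r t < l"
  shows "\<exists>j<l. real l * card {t. t < T \<and> r t = j} \<le> real T"
proof (rule ccontr)
  assume "\<not> ?thesis"
  then have "\<forall>j\<in>{..<l}. real T / real l < card {t. t < T \<and> r t = j}"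
    using \<open>0 < l\<close> by (auto simp: field_simps)
  then have "(\<Sum>j<l. real T / real l) < (\<Sum>j<l. real (card {t. t < T \<and> r t = j}))"
    using \<open>0 < l\<close> by (intro sum_strict_mono) auto
  also have "\<dots> = (\<Sum>j<l. \<Sum>t<T. of_bool (r t = j))"
    by (simp add: Int_def)
  also have "\<dots> = (\<Sum>t<T. \<Sum>j<l. of_bool (r t = j))"
    by (rule sum.swap)
  also have "\<dots> = (\<Sum>t<T. 1)"
    using assms(2) by (intro sum.cong refl) (simp add: of_bool_def sum.delta del: sum_of_bool_eq)
  finally show False
    using \<open>0 < l\<close> by simp
qed

lemma traj_cost_nonneg:
  assumes "\<And>i. 0 \<le> w i" and "valid_seq l \<sigma>" and "\<And>t. y t \<in> simplex l"
  shows "0 \<le> traj_cost l w \<sigma> y"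
  unfolding traj_cost_def
proof (intro sum_nonneg add_nonneg_nonneg)
  fix t assume "t \<in> {..<length \<sigma>}"
  then have q: "valid_request l (\<sigma> ! t)"
    using assms(2) by (auto simp: valid_seq_def)
  then have "y (Suc t) (fst (\<sigma> ! t)) \<in> {0..1}"
    using assms(3) by (auto simp: simplex_def valid_request_def)
  then show "0 \<le> snd (\<sigma> ! t) (y (Suc t) (fst (\<sigma> ! t)))"
    using q by (simp add: valid_request_def)
  show "0 \<le> ereal (\<Sum>i<l. w i * \<bar>y (Suc t) i - y t i\<bar>)"
    using assms(1) by (simp add: sum_nonneg)
qed

lemma opt_cost_nonneg:
  assumes "\<And>i. 0 \<le> w i" and "valid_seq l \<sigma>"
  shows "0 \<le> opt_cost l w x0 \<sigma>"
  unfolding opt_cost_def by (rule INF_greatest) (use traj_cost_nonneg assms in auto)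

lemma opt_cost_le_traj_cost:
  assumes "y 0 = x0" and "\<And>t. y t \<in> simplex l"
  shows "opt_cost l w x0 \<sigma> \<le> traj_cost l w \<sigma> y"
  unfolding opt_cost_def by (rule INF_lower) (use assms in auto)

lemma traj_cost_single_move:
  assumes "\<And>i. 0 \<le> w i"
  shows "traj_cost l w \<sigma> (\<lambda>t. if t = 0 then x0 else z) \<le>
    ereal (\<Sum>i<l. w i * \<bar>z i - x0 i\<bar>) + (\<Sum>t<length \<sigma>. snd (\<sigma> ! t) (z (fst (\<sigma> ! t))))"
proof -
  define move where "move = (\<Sum>i<l. w i * \<bar>z i - x0 i\<bar>)"
  have "traj_cost l w \<sigma> (\<lambda>t. if t = 0 then x0 else z) =
      (\<Sum>t<length \<sigma>. ereal (if t = 0 then move else 0) + snd (\<sigma> ! t) (z (fst (\<sigma> ! t))))"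
    unfolding traj_cost_def move_def by (intro sum.cong) auto
  also have "\<dots> = ereal (\<Sum>t<length \<sigma>. if t = 0 then move else 0) +
      (\<Sum>t<length \<sigma>. snd (\<sigma> ! t) (z (fst (\<sigma> ! t))))"
    by (simp add: sum.distrib)
  also have "(\<Sum>t<length \<sigma>. if t = 0 then move else 0) \<le> move"
    using assms by (simp add: move_def sum_nonneg)
  finally show ?thesis
    unfolding move_def by (simp add: add_right_mono)
qed

definition penalty :: "nat \<Rightarrow> real" where
  "penalty l = 1 / (real l * (real l - 1))"

definition threshold_cost :: "nat \<Rightarrow> real \<Rightarrow> ereal" where
  "threshold_cost l u = (if u < 1 / (real l - 1) then ereal (penalty l) else 0)"

lemma penalty_nonneg: "0 \<le> penalty l"
  unfolding penalty_def by (cases l) auto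

lemma valid_threshold_request: "r < l \<Longrightarrow> valid_request l (r, threshold_cost l)"
  unfolding valid_request_def threshold_cost_def using penalty_nonneg by auto

lemma threshold_step_cost:
  assumes "2 \<le> l" and "r < l" and "x r \<le> 1 / real l"
  shows "ereal (penalty l) \<le> ereal (\<Sum>i<l. \<bar>x' i - x i\<bar>) + threshold_cost l (x' r)"
proof (cases "x' r < 1 / (real l - 1)")
  case True
  then show ?thesis
    by (simp add: threshold_cost_def sum_nonneg)
next
  case False
  have "1 / (real l - 1) - 1 / real l = penalty l"
    using assms(1) by (simp add: penalty_def field_simps)
  then have "penalty l \<le> \<bar>x' r - x r\<bar>"
    using False assms(3) by linarith
  also have "\<dots> \<le> (\<Sum>i<l. \<bar>x' i - x i\<bar>)"
    using assms(2) by (intro member_le_sum) auto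
  finally show ?thesis
    using False by (simp add: threshold_cost_def)
qed

primrec adversary :: "nat \<Rightarrow> (request list \<Rightarrow> nat \<Rightarrow> real) \<Rightarrow> nat \<Rightarrow> request list" where
  "adversary l A 0 = []"
| "adversary l A (Suc n) =
     adversary l A n @ [(least_coord l (A (adversary l A n)), threshold_cost l)]"

lemma length_adversary [simp]: "length (adversary l A n) = n"
  by (induction n) auto

lemma take_adversary: "m \<le> n \<Longrightarrow> take m (adversary l A n) = adversary l A m"
  by (induction n) (auto simp: le_Suc_eq)

lemma nth_adversary:
  "t < n \<Longrightarrow> adversary l A n ! t = (least_coord l (A (adversary l A t)), threshold_cost l)"
  by (metis Suc_leI adversary.simps(2) length_adversary nth_append_length take_adversary
      nth_take lessI)

lemma valid_seq_adversary: "0 < l \<Longrightarrow> valid_seq l (adversary l A n)"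
  by (induction n) (auto simp: valid_seq_def intro!: valid_threshold_request least_coord_lt)

lemma alg_cost_adversary_ge:
  assumes "2 \<le> l" and "online_alg l A"
  shows "ereal (real T * penalty l) \<le> alg_cost l (\<lambda>_. 1) A (adversary l A T)"
proof -
  have "ereal (real T * penalty l) = (\<Sum>t<T. ereal (penalty l))"
    by simp
  also have "\<dots> \<le> alg_cost l (\<lambda>_. 1) A (adversary l A T)"
    unfolding alg_cost_def traj_cost_def length_adversary
  proof (rule sum_mono)
    fix t assume "t \<in> {..<T}"
    then have t: "t < T" by simp
    let ?x = "A (adversary l A t)"
    have "?x \<in> simplex l"
      using assms valid_seq_adversary by (simp add: online_alg_def)
    then have "?x (least_coord l ?x) \<le> 1 / real l"
      using assms(1) by (intro simplex_least_coord_le) auto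
    then show "ereal (penalty l) \<le>
      ereal (\<Sum>i<l. 1 * \<bar>A (take (Suc t) (adversary l A T)) i - A (take t (adversary l A T)) i\<bar>) +
      snd (adversary l A T ! t) (A (take (Suc t) (adversary l A T)) (fst (adversary l A T ! t)))"
      using t assms(1) threshold_step_cost least_coord_lt
      by (simp add: take_adversary nth_adversary)
  qed
  finally show ?thesis .
qed

lemma opt_cost_adversary_le:
  assumes "2 \<le> l" and "online_alg l A"
  shows "opt_cost l (\<lambda>_. 1) (A []) (adversary l A T) \<le> ereal (2 + real T * penalty l / real l)"
proof -
  define r where "r t = least_coord l (A (adversary l A t))" for t
  have r: "\<forall>t<T. r t < l"
    using assms(1) least_coord_lt by (simp add: r_def)
  then obtain j where "j < l" and j: "real l * card {t. t < T \<and> r t = j} \<le> real T"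
    using assms(1) ex_rarely_chosen[of l T r] by auto
  define z where "z = uniform_avoiding l j"
  have x0: "A [] \<in> simplex l"
    using assms(2) by (simp add: online_alg_def valid_seq_def)
  have z: "z \<in> simplex l"
    unfolding z_def using assms(1) \<open>j < l\<close> by (rule uniform_avoiding_in_simplex)
  have service: "threshold_cost l (z (r t)) = ereal (penalty l * of_bool (r t = j))" if "t < T" for t
    using that r assms(1) by (auto simp: threshold_cost_def z_def uniform_avoiding_def)
  have "opt_cost l (\<lambda>_. 1) (A []) (adversary l A T)
      \<le> traj_cost l (\<lambda>_. 1) (adversary l A T) (\<lambda>t. if t = 0 then A [] else z)"
    using x0 z by (intro opt_cost_le_traj_cost) auto
  also have "\<dots> \<le> ereal (\<Sum>i<l. \<bar>z i - A [] i\<bar>) +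
      (\<Sum>t<length (adversary l A T). snd (adversary l A T ! t) (z (fst (adversary l A T ! t))))"
    using traj_cost_single_move[of "\<lambda>_. 1" l "adversary l A T" "A []" z] by simp
  also have "(\<Sum>t<length (adversary l A T). snd (adversary l A T ! t) (z (fst (adversary l A T ! t))))
      = (\<Sum>t<T. threshold_cost l (z (r t)))"
    by (intro sum.cong) (simp_all add: nth_adversary r_def)
  also have "(\<Sum>t<T. threshold_cost l (z (r t))) = ereal (penalty l * card {t. t < T \<and> r t = j})"
    by (simp add: service sum_distrib_left[symmetric] Int_def)
  also have "ereal (\<Sum>i<l. \<bar>z i - A [] i\<bar>) + \<dots> \<le> ereal (2 + real T * penalty l / real l)"
  proof -
    have "card {t. t < T \<and> r t = j} \<le> real T / real l"
      using j assms(1) by (simp add: field_simps)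
    from mult_left_mono[OF this penalty_nonneg]
    have "penalty l * card {t. t < T \<and> r t = j} \<le> real T * penalty l / real l"
      by (simp add: ac_simps)
    then show ?thesis
      using simplex_l1_dist_le_2[OF x0 z] by simp
  qed
  finally show ?thesis .
qed

lemma mult_le_if_ratio_lt_half:
  fixes \<rho> v L a :: real
  assumes "0 < L" and "\<rho> < L / 2" and "0 \<le> v" and "v \<le> 2 + a / L" and "0 \<le> a"
  shows "\<rho> * v \<le> L + a / 2"
proof (cases "0 \<le> \<rho>")
  case True
  then have "\<rho> * v \<le> L / 2 * (2 + a / L)"
    using assms by (intro mult_mono) auto
  also have "\<dots> = L + a / 2"
    using assms(1) by (simp add: field_simps)
  finally show ?thesis .
next
  case False
  then have "\<rho> * v \<le> 0"
    using assms(3) by (simp add: mult_nonpos_nonneg)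
  then show ?thesis
    using assms by simp
qed

theorem proposition1:
  shows "\<exists>c::real. c > 0 \<and> (\<forall>l::nat. l \<ge> 2 \<longrightarrow>
     (\<forall>A \<rho>. online_alg l A \<and> competitive l (\<lambda>_. 1) A \<rho> \<longrightarrow> \<rho> \<ge> c * real l))"
proof (intro exI[of _ "1/2"] conjI allI impI)
  fix l :: nat and A \<rho>
  assume l: "2 \<le> l" and "online_alg l A \<and> competitive l (\<lambda>_. 1) A \<rho>"
  then obtain b where A: "online_alg l A" and b: "\<And>\<sigma>. valid_seq l \<sigma> \<Longrightarrow>
      alg_cost l (\<lambda>_. 1) A \<sigma> \<le> ereal \<rho> * opt_cost l (\<lambda>_. 1) (A []) \<sigma> + ereal b"
    by (auto simp: competitive_def)
  show "1/2 * real l \<le> \<rho>"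
  proof (rule ccontr)
    assume "\<not> 1/2 * real l \<le> \<rho>"
    have "0 < penalty l" using l by (simp add: penalty_def)
    then obtain T where T: "2 * (real l + b) < real T * penalty l"
      using ex_less_of_nat_mult by blast
    let ?\<sigma> = "adversary l A T"
    have valid: "valid_seq l ?\<sigma>" using l by (simp add: valid_seq_adversary)
    obtain v where v: "opt_cost l (\<lambda>_. 1) (A []) ?\<sigma> = ereal v" "0 \<le> v"
      "v \<le> 2 + real T * penalty l / real l"
      using opt_cost_nonneg[of "\<lambda>_. 1" l ?\<sigma> "A []", OF _ valid] opt_cost_adversary_le[OF l A, of T]
      by (cases "opt_cost l (\<lambda>_. 1) (A []) ?\<sigma>") auto
    have "ereal (real T * penalty l) \<le> alg_cost l (\<lambda>_. 1) A ?\<sigma>"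
      by (rule alg_cost_adversary_ge[OF l A])
    also have "\<dots> \<le> ereal (\<rho> * v + b)"
      using b[OF valid] v(1) by simp
    finally have "real T * penalty l \<le> \<rho> * v + b"
      by simp
    moreover have "\<rho> * v \<le> real l + real T * penalty l / 2"
      using mult_le_if_ratio_lt_half \<open>\<not> 1/2 * real l \<le> \<rho>\<close> v l \<open>0 < penalty l\<close> by simp
    ultimately show False using T by simp
  qed
qed simp

end
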